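(* Let $p,q\in[1,\infty]$, let $\varphi_0,\varphi_1,\varphi$ be positive non-degenerate quasi-concave functions on $(0,\infty)$, let $\{\widetilde t_i\}$ be a discretizing sequence for $\varphi(\varphi_0,\varphi_1)$, $\{\tau_k\}$ a discretizing sequence for $\varphi_0$ and $\{z_k\}$ a discretizing sequence for $\varphi_1$. Let $M_k^0=\{i:\tau_k\le\widetilde t_i\le\tau_{k+1}\}$, $M_k^1=\{i:z_k\le\widetilde t_i\le z_{k+1}\}$, and for $t>0$ let $\Omega_t=\{y>0:\ \varphi_1(y)/\varphi_0(y)\le t\}$, $\Omega_t^c=\{y>0:\ \varphi_1(y)/\varphi_0(y)>t\}$. Write $A_0=l_p\big(l_q^{M_k^0}(1/\varphi_0(\widetilde t_i))\big)$ and $A_1=l_p\big(l_q^{M_k^1}(1/\varphi_1(\widetilde t_i))\big)$. Then, with constants independent of $a=\{a_i\}\in A_0+A_1$ and $t>0$, $$K(t,a;A_0,A_1)\approx\big\|\{a_i\chi_{\Omega_t}(\widetilde t_i)\}\big\|_{A_0}+t\,\big\|\{a_i\chi_{\Omega_t^c}(\widetilde t_i)\}\big\|_{A_1}.$$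
   Context: A function $\psi:(0,\infty)\to(0,\infty)$ is non-degenerate quasi-concave if it is non-decreasing, $\psi(t)/t$ is non-increasing, and $\lim_{t\to0+}\psi(t)=\lim_{t\to\infty}\psi(t)/t=\lim_{t\to0+}t/\psi(t)=\lim_{t\to\infty}1/\psi(t)=0$. $\varphi(\varphi_0,\varphi_1)(t)=\varphi_0(t)\varphi(\varphi_1(t)/\varphi_0(t))$. A positive sequence is strongly increasing if $\inf_k a_{k+1}/a_k\ge2$, strongly decreasing if $\sup_k a_{k+1}/a_k\le1/2$. A strongly increasing $\{s_k\}_{k\in\mathbb Z}$ is a discretizing sequence for $\psi$ if $\{\psi(s_k)\}$ is strongly increasing, $\{\psi(s_k)/s_k\}$ is strongly decreasing, and $\mathbb Z=\mathbb Z_1\sqcup\mathbb Z_2$ with $\psi(s_{k+1})\le2\psi(s_k)$ for $k\in\mathbb Z_1$ and $\psi(s_k)/s_k\le2\psi(s_{k+1})/s_{k+1}$ for $k\in\mathbb Z_2$. For a Banach couple $(A_0,A_1)$, $K(t,a;A_0,A_1)=\inf_{a=b+c,\,b\in A_0,c\in A_1}(\|b\|_{A_0}+t\|c\|_{A_1})$. For sets $M_k\subset\mathbb Z$ and positive weight $u$, $l_p(l_q^{M_k}(u))$ is the space of $\{a_i\}_{i\in\mathbb Z}$ with norm $\big(\sum_{k\in\mathbb Z}(\sum_{i\in M_k}|a_iu_i|^q)^{p/q}\big)^{1/p}$ (usual modification if $p$ or $q$ is $\infty$). $\chi_\Omega$ is the indicator function of $\Omega$; $X\approx Y$ means $c^{-1}Y\le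 X\le cY$ for a constant $c$. *)

theory Defs
  imports "HOL-Analysis.Analysis"
begin

definition nondeg_quasi_concave :: "(real \<Rightarrow> real) \<Rightarrow> bool" where
  "nondeg_quasi_concave \<psi> \<longleftrightarrow>
     (\<forall>t>0. \<psi> t > 0) \<and>
     mono_on {0<..} \<psi> \<and>
     antimono_on {0<..} (\<lambda>t. \<psi> t / t) \<and>
     (\<psi> \<longlongrightarrow> 0) (at_right 0) \<and>
     ((\<lambda>t. \<psi> t / t) \<longlongrightarrow> 0) at_top \<and>
     ((\<lambda>t. t / \<psi> t) \<longlongrightarrow> 0) (at_right 0) \<and>
     ((\<lambda>t. 1 / \<psi> t) \<longlongrightarrow> 0) at_top"

definition interp_fun :: "(real \<Rightarrow> real) \<Rightarrow> (real \<Rightarrow> real) \<Rightarrow> (real \<Rightarrow> real) \<Rightarrow> real \<Rightarrow> real" where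
  "interp_fun \<phi> \<phi>0 \<phi>1 t = \<phi>0 t * \<phi> (\<phi>1 t / \<phi>0 t)"

definition strongly_increasing :: "(int \<Rightarrow> real) \<Rightarrow> bool" where
  "strongly_increasing a \<longleftrightarrow> (\<forall>k. a k > 0) \<and> (\<forall>k. 2 * a k \<le> a (k+1))"

definition strongly_decreasing :: "(int \<Rightarrow> real) \<Rightarrow> bool" where
  "strongly_decreasing a \<longleftrightarrow> (\<forall>k. a k > 0) \<and> (\<forall>k. a (k+1) \<le> a k / 2)"

definition discretizing_seq :: "(int \<Rightarrow> real) \<Rightarrow> (real \<Rightarrow> real) \<Rightarrow> bool" where
  "discretizing_seq s \<psi> \<longleftrightarrow>
     strongly_increasing s \<and>
     strongly_increasing (\<lambda>k. \<psi> (s k)) \<and>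
     strongly_decreasing (\<lambda>k. \<psi> (s k) / s k) \<and>
     (\<exists>Z1 Z2. Z1 \<inter> Z2 = {} \<and> Z1 \<union> Z2 = UNIV \<and>
        (\<forall>k\<in>Z1. \<psi> (s (k+1)) \<le> 2 * \<psi> (s k)) \<and>
        (\<forall>k\<in>Z2. \<psi> (s k) / s k \<le> 2 * (\<psi> (s (k+1)) / s (k+1))))"

text \<open>Exponents p, q range over [1, infinity], encoded as extended reals.
  Norm of l_p(l_q^{M_k}(u)) for a finite truncation: outer indices in a finite set K,
  inner indices in a finite set G.\<close>
definition inner_trunc :: "ereal \<Rightarrow> (int \<Rightarrow> int set) \<Rightarrow> (int \<Rightarrow> real) \<Rightarrow> (int \<Rightarrow> real) \<Rightarrow> int set \<Rightarrow> int \<Rightarrow> real" where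
  "inner_trunc q M u a G k =
     (if q = \<infinity> then Max (insert 0 ((\<lambda>i. \<bar>a i * u i\<bar>) ` (G \<inter> M k)))
      else (\<Sum>i\<in>G \<inter> M k. \<bar>a i * u i\<bar> powr real_of_ereal q) powr (1 / real_of_ereal q))"

definition mixed_trunc :: "ereal \<Rightarrow> ereal \<Rightarrow> (int \<Rightarrow> int set) \<Rightarrow> (int \<Rightarrow> real) \<Rightarrow> (int \<Rightarrow> real) \<Rightarrow> int set \<Rightarrow> int set \<Rightarrow> real" where
  "mixed_trunc p q M u a K G =
     (if p = \<infinity> then Max (insert 0 (inner_trunc q M u a G ` K))
      else (\<Sum>k\<in>K. inner_trunc q M u a G k powr real_of_ereal p) powr (1 / real_of_ereal p))"

text \<open>The (extended) norm of a in l_p(l_q^{M_k}(u)); it is infinite iff a is not in the space.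
  It is the supremum over finite truncations, which equals the usual norm.\<close>
definition mixed_norm :: "ereal \<Rightarrow> ereal \<Rightarrow> (int \<Rightarrow> int set) \<Rightarrow> (int \<Rightarrow> real) \<Rightarrow> (int \<Rightarrow> real) \<Rightarrow> ennreal" where
  "mixed_norm p q M u a =
     (SUP KG \<in> {(K, G). finite K \<and> finite G}. ennreal (mixed_trunc p q M u a (fst KG) (snd KG)))"

definition in_space :: "((int \<Rightarrow> real) \<Rightarrow> ennreal) \<Rightarrow> (int \<Rightarrow> real) \<Rightarrow> bool" where
  "in_space N a \<longleftrightarrow> N a < \<infinity>"

definition K_functional :: "((int \<Rightarrow> real) \<Rightarrow> ennreal) \<Rightarrow> ((int \<Rightarrow> real) \<Rightarrow> ennreal) \<Rightarrow> real \<Rightarrow> (int \<Rightarrow> real) \<Rightarrow> ennreal" where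
  "K_functional N0 N1 t a =
     (INF bc \<in> {(b, c). a = (\<lambda>i. b i + c i) \<and> in_space N0 b \<and> in_space N1 c}.
        N0 (fst bc) + ennreal t * N1 (snd bc))"

definition in_sum_space :: "((int \<Rightarrow> real) \<Rightarrow> ennreal) \<Rightarrow> ((int \<Rightarrow> real) \<Rightarrow> ennreal) \<Rightarrow> (int \<Rightarrow> real) \<Rightarrow> bool" where
  "in_sum_space N0 N1 a \<longleftrightarrow> (\<exists>b c. a = (\<lambda>i. b i + c i) \<and> in_space N0 b \<and> in_space N1 c)"

end

theory Submission
  imports Defs
begin

(* Put r_i = phi1(t_i)/phi0(t_i) and rho_i = min (r_i/t) (t/r_i).  On Omega_t the weight 1/phi0(t_i)
   of A0 is t rho_i times the weight 1/phi1(t_i) of A1, and off Omega_t the weight of A1 is rho_i/t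
   times that of A0.  Since {t_i} discretizes phi(phi0,phi1) = phi0 phi(r) = phi1 phi(r)/r while
   {tau_k} and {z_k} discretize phi0 and phi1, the products rho_i rho_i' decay like 2^-|i-i'| inside
   every block M_k^0 or M_k^1, so rho has uniformly bounded sums over blocks, and a Schur test moves
   the mixed norm of a chi_Omega from A0 to t times its A1-norm, and that of a chi_Omega^c from A1 to
   1/t times its A0-norm.  Splitting an arbitrary decomposition a = b + c along Omega_t and using the
   triangle inequality then compares both sides with the K-functional. *)

section \<open>Finite l_q norms\<close>

lemma scaled_powr_le:
  fixes t y p :: real
  assumes "0 \<le> t" "t \<le> 1" "0 \<le> y" "1 \<le> p"
  shows "(t * y) powr p \<le> t * y powr p"
proof -
  have "t powr p \<le> t"
    using assms powr_mono'[of 1 p t] by simp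
  then show ?thesis
    using assms by (simp add: powr_mult mult_right_mono)
qed

lemma convex_on_powr_nonneg:
  fixes p :: real
  assumes "1 \<le> p"
  shows "convex_on {0..} (\<lambda>x. x powr p)"
proof (rule convex_onI)
  fix t x y :: real
  assume t: "0 < t" "t < 1" and xy: "x \<in> {0..}" "y \<in> {0..}"
  show "((1 - t) *\<^sub>R x + t *\<^sub>R y) powr p \<le> (1 - t) * x powr p + t * y powr p"
  proof (cases "x = 0 \<or> y = 0")
    case True
    then show ?thesis
      using scaled_powr_le[of t y p] scaled_powr_le[of "1 - t" x p] t xy assms by auto
  next
    case False
    then show ?thesis
      using powr_convex[OF assms] t xy unfolding convex_on_def by auto
  qed
qed (rule convex_real_interval)

lemma weighted_power_mean_le:
  fixes w y :: "'a \<Rightarrow> real"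
  assumes "finite F" "1 \<le> p" "\<And>i. i \<in> F \<Longrightarrow> 0 \<le> w i" "\<And>i. i \<in> F \<Longrightarrow> 0 \<le> y i"
  shows "(\<Sum>i\<in>F. w i * y i) powr p \<le> (\<Sum>i\<in>F. w i) powr (p - 1) * (\<Sum>i\<in>F. w i * y i powr p)"
proof (cases "(\<Sum>i\<in>F. w i) = 0")
  case True
  then have "\<forall>i\<in>F. w i = 0"
    using assms sum_nonneg_eq_0_iff by blast
  then show ?thesis by simp
next
  case False
  define W where "W = (\<Sum>i\<in>F. w i)"
  have W: "0 < W"
    using False assms by (simp add: W_def order.not_eq_order_implies_strict sum_nonneg)
  have "(\<Sum>i\<in>F. (w i / W) *\<^sub>R y i) powr p \<le> (\<Sum>i\<in>F. (w i / W) * y i powr p)"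
    by (rule convex_on_sum[OF assms(1) _ convex_on_powr_nonneg[OF assms(2)]])
      (use assms W False in \<open>auto simp: W_def simp flip: sum_divide_distrib\<close>)
  then have "((\<Sum>i\<in>F. w i * y i) / W) powr p \<le> (\<Sum>i\<in>F. w i * y i powr p) / W"
    by (simp flip: sum_divide_distrib)
  then have "(\<Sum>i\<in>F. w i * y i) powr p / W powr p \<le> (\<Sum>i\<in>F. w i * y i powr p) / W"
    using W assms by (simp add: powr_divide sum_nonneg)
  then have "(\<Sum>i\<in>F. w i * y i) powr p \<le> W powr p / W * (\<Sum>i\<in>F. w i * y i powr p)"
    using W by (simp add: field_simps)
  then show ?thesis
    using W by (simp add: W_def powr_diff)
qed

lemma root_sum_powr_le_sum:
  fixes x :: "'a \<Rightarrow> real"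
  assumes "finite F" "1 \<le> p" "\<And>i. i \<in> F \<Longrightarrow> 0 \<le> x i"
  shows "(\<Sum>i\<in>F. x i powr p) powr (1 / p) \<le> (\<Sum>i\<in>F. x i)"
proof -
  define S where "S = (\<Sum>i\<in>F. x i)"
  have S: "0 \<le> S"
    using assms by (simp add: S_def sum_nonneg)
  have "x i powr p \<le> x i * S powr (p - 1)" if "i \<in> F" for i
  proof -
    have "x i \<le> S"
      unfolding S_def using assms that by (intro member_le_sum) auto
    then have "x i * x i powr (p - 1) \<le> x i * S powr (p - 1)"
      using assms that by (intro mult_left_mono powr_mono2) auto
    then show ?thesis
      using assms that by (cases "x i = 0") (auto simp: powr_mult_base)
  qed
  then have "(\<Sum>i\<in>F. x i powr p) \<le> (\<Sum>i\<in>F. x i * S powr (p - 1))"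
    by (rule sum_mono)
  also have "\<dots> = S * S powr (p - 1)"
    by (simp add: S_def sum_distrib_right)
  also have "\<dots> = S powr p"
    using S by (cases "S = 0") (auto simp: powr_mult_base)
  finally have "(\<Sum>i\<in>F. x i powr p) powr (1 / p) \<le> (S powr p) powr (1 / p)"
    using assms by (intro powr_mono2) (auto intro: sum_nonneg)
  also have "\<dots> = S"
    using S assms by (simp add: powr_powr)
  finally show ?thesis
    by (simp add: S_def)
qed

definition lq_norm :: "ereal \<Rightarrow> 'a set \<Rightarrow> ('a \<Rightarrow> real) \<Rightarrow> real" where
  "lq_norm q F x = (if q = \<infinity> then Max (insert 0 (x ` F))
     else (\<Sum>i\<in>F. x i powr real_of_ereal q) powr (1 / real_of_ereal q))"

lemma real_of_ereal_ge_one: "1 \<le> q \<Longrightarrow> q \<noteq> \<infinity> \<Longrightarrow> 1 \<le> real_of_ereal q"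
  by (cases q) auto

lemma lq_norm_nonneg: "finite F \<Longrightarrow> 0 \<le> lq_norm q F x"
  unfolding lq_norm_def by auto

lemma lq_norm_mono:
  assumes "finite F" "1 \<le> q" "\<And>i. i \<in> F \<Longrightarrow> 0 \<le> x i" "\<And>i. i \<in> F \<Longrightarrow> x i \<le> y i"
  shows "lq_norm q F x \<le> lq_norm q F y"
proof (cases "q = \<infinity>")
  case True
  have "v \<le> Max (insert 0 (y ` F))" if "v \<in> insert 0 (x ` F)" for v
    using that assms by (auto simp: Max_ge_iff intro: order_trans)
  then show ?thesis
    using True assms(1) by (simp add: lq_norm_def Max_le_iff)
next
  case False
  have "1 \<le> real_of_ereal q"
    using assms(2) False by (rule real_of_ereal_ge_one)
  then show ?thesis
    using False assms by (auto simp: lq_norm_def intro!: powr_mono2 sum_mono sum_nonneg)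
qed

lemma member_le_lq_norm:
  assumes "finite F" "1 \<le> q" "\<And>i. i \<in> F \<Longrightarrow> 0 \<le> x i" "j \<in> F"
  shows "x j \<le> lq_norm q F x"
proof (cases "q = \<infinity>")
  case True
  then show ?thesis
    using assms by (simp add: lq_norm_def)
next
  case False
  define s where "s = real_of_ereal q"
  have s: "1 \<le> s"
    unfolding s_def using assms(2) False by (rule real_of_ereal_ge_one)
  have "x j powr s \<le> (\<Sum>i\<in>F. x i powr s)"
    using assms by (intro member_le_sum) auto
  then have "(x j powr s) powr (1 / s) \<le> (\<Sum>i\<in>F. x i powr s) powr (1 / s)"
    using s by (intro powr_mono2) auto
  then show ?thesis
    using False s assms by (simp add: lq_norm_def s_def powr_powr)
qed

lemma lq_norm_le_sum:
  assumes "finite F" "1 \<le> q" "\<And>i. i \<in> F \<Longrightarrow> 0 \<le> x i"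
  shows "lq_norm q F x \<le> (\<Sum>i\<in>F. x i)"
proof (cases "q = \<infinity>")
  case True
  then show ?thesis
    using assms by (auto simp: lq_norm_def intro!: sum_nonneg member_le_sum)
next
  case False
  then show ?thesis
    using root_sum_powr_le_sum[OF assms(1) real_of_ereal_ge_one[OF assms(2) False]] assms
    by (simp add: lq_norm_def)
qed

lemma lq_norm_mult_left:
  assumes "finite F" "1 \<le> q" "\<And>i. i \<in> F \<Longrightarrow> 0 \<le> x i" "0 \<le> c"
  shows "lq_norm q F (\<lambda>i. c * x i) = c * lq_norm q F x"
proof (cases "q = \<infinity>")
  case True
  have "insert 0 ((\<lambda>i. c * x i) ` F) = (\<lambda>v. c * v) ` insert 0 (x ` F)"
    by auto
  moreover have "Max ((\<lambda>v. c * v) ` insert 0 (x ` F)) = c * Max (insert 0 (x ` F))"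
    using assms by (intro mono_Max_commute[symmetric]) (auto intro: monoI mult_left_mono)
  ultimately show ?thesis
    using True by (simp add: lq_norm_def)
next
  case False
  define s where "s = real_of_ereal q"
  have s: "1 \<le> s"
    unfolding s_def using assms(2) False by (rule real_of_ereal_ge_one)
  have "(\<Sum>i\<in>F. (c * x i) powr s) = c powr s * (\<Sum>i\<in>F. x i powr s)"
    using assms by (simp add: powr_mult sum_distrib_left)
  then have "(\<Sum>i\<in>F. (c * x i) powr s) powr (1 / s) = c * (\<Sum>i\<in>F. x i powr s) powr (1 / s)"
    using assms s by (simp add: powr_mult powr_powr sum_nonneg)
  then show ?thesis
    using False by (simp add: lq_norm_def s_def)
qed

lemma root_sum_powr_add_le:
  fixes x y :: "'a \<Rightarrow> real"
  assumes "finite F" "1 \<le> s" "\<And>i. i \<in> F \<Longrightarrow> 0 \<le> x i" "\<And>i. i \<in> F \<Longrightarrow> 0 \<le> y i"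
  shows "(\<Sum>i\<in>F. (x i + y i) powr s) powr (1 / s)
    \<le> 4 * ((\<Sum>i\<in>F. x i powr s) powr (1 / s) + (\<Sum>i\<in>F. y i powr s) powr (1 / s))"
proof -
  define X where "X = (\<Sum>i\<in>F. x i powr s)"
  define Y where "Y = (\<Sum>i\<in>F. y i powr s)"
  have XY: "0 \<le> X" "0 \<le> Y"
    by (simp_all add: X_def Y_def sum_nonneg)
  have "(x i + y i) powr s \<le> 2 powr s * (x i powr s + y i powr s)" if "i \<in> F" for i
  proof -
    have "(x i + y i) powr s \<le> (2 * max (x i) (y i)) powr s"
      using assms that by (intro powr_mono2) auto
    also have "\<dots> = 2 powr s * max (x i) (y i) powr s"
      using assms that by (simp add: powr_mult)
    also have "max (x i) (y i) powr s \<le> x i powr s + y i powr s"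
      by (simp add: max_def)
    finally show ?thesis
      by simp
  qed
  then have "(\<Sum>i\<in>F. (x i + y i) powr s) \<le> (\<Sum>i\<in>F. 2 powr s * (x i powr s + y i powr s))"
    by (rule sum_mono)
  also have "\<dots> = 2 powr s * (X + Y)"
    by (simp add: X_def Y_def sum.distrib flip: sum_distrib_left)
  finally have "(\<Sum>i\<in>F. (x i + y i) powr s) powr (1 / s) \<le> (2 powr s * (X + Y)) powr (1 / s)"
    using assms by (intro powr_mono2) (auto intro: sum_nonneg)
  also have "\<dots> = 2 * (X + Y) powr (1 / s)"
    using assms XY by (simp add: powr_mult powr_powr)
  also have "(X + Y) powr (1 / s) \<le> (2 * max X Y) powr (1 / s)"
    using assms XY by (intro powr_mono2) auto
  also have "\<dots> \<le> 2 * max X Y powr (1 / s)"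
    using assms XY powr_mono[of "1 / s" 1 2] by (simp add: powr_mult mult_right_mono)
  also have "max X Y powr (1 / s) \<le> X powr (1 / s) + Y powr (1 / s)"
    by (auto simp: max_def)
  finally show ?thesis
    by (simp add: X_def Y_def)
qed

lemma lq_norm_add_le:
  assumes "finite F" "1 \<le> q" "\<And>i. i \<in> F \<Longrightarrow> 0 \<le> x i" "\<And>i. i \<in> F \<Longrightarrow> 0 \<le> y i"
  shows "lq_norm q F (\<lambda>i. x i + y i) \<le> 4 * (lq_norm q F x + lq_norm q F y)"
proof (cases "q = \<infinity>")
  case True
  have "lq_norm q F (\<lambda>i. x i + y i) \<le> lq_norm q F x + lq_norm q F y"
    using True assms by (auto simp: lq_norm_def intro!: Max.boundedI add_mono)
  then show ?thesis
    using lq_norm_nonneg[OF assms(1), of q x] lq_norm_nonneg[OF assms(1), of q y] by argo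
next
  case False
  then show ?thesis
    using root_sum_powr_add_le[OF assms(1) real_of_ereal_ge_one[OF assms(2) False]] assms
    by (simp add: lq_norm_def)
qed

lemma root_sum_powr_schur_test:
  fixes A :: "'k \<Rightarrow> 'j \<Rightarrow> real" and y :: "'j \<Rightarrow> real"
  assumes fin: "finite K" "finite J" and "1 \<le> s" "0 \<le> B"
    and nonneg: "\<And>k j. k \<in> K \<Longrightarrow> j \<in> J \<Longrightarrow> 0 \<le> A k j" "\<And>j. j \<in> J \<Longrightarrow> 0 \<le> y j"
    and rows: "\<And>k. k \<in> K \<Longrightarrow> (\<Sum>j\<in>J. A k j) \<le> B"
    and cols: "\<And>j. j \<in> J \<Longrightarrow> (\<Sum>k\<in>K. A k j) \<le> B"
  shows "(\<Sum>k\<in>K. (\<Sum>j\<in>J. A k j * y j) powr s) powr (1 / s) \<le> B * (\<Sum>j\<in>J. y j powr s) powr (1 / s)"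
proof -
  have row: "(\<Sum>j\<in>J. A k j * y j) powr s \<le> B powr (s - 1) * (\<Sum>j\<in>J. A k j * y j powr s)"
    if "k \<in> K" for k
  proof -
    have "(\<Sum>j\<in>J. A k j * y j) powr s \<le> (\<Sum>j\<in>J. A k j) powr (s - 1) * (\<Sum>j\<in>J. A k j * y j powr s)"
      using assms that by (intro weighted_power_mean_le) auto
    also have "\<dots> \<le> B powr (s - 1) * (\<Sum>j\<in>J. A k j * y j powr s)"
      using assms rows[OF that] that
      by (intro mult_right_mono powr_mono2 sum_nonneg mult_nonneg_nonneg) auto
    finally show ?thesis .
  qed
  have "(\<Sum>k\<in>K. (\<Sum>j\<in>J. A k j * y j) powr s) \<le> (\<Sum>k\<in>K. B powr (s - 1) * (\<Sum>j\<in>J. A k j * y j powr s))"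
    using row by (rule sum_mono)
  also have "\<dots> = B powr (s - 1) * (\<Sum>j\<in>J. (\<Sum>k\<in>K. A k j) * y j powr s)"
    by (simp add: sum_distrib_left sum_distrib_right sum.swap[of _ K])
  also have "\<dots> \<le> B powr (s - 1) * (\<Sum>j\<in>J. B * y j powr s)"
    using cols by (intro mult_left_mono sum_mono mult_right_mono) auto
  also have "\<dots> = (B * B powr (s - 1)) * (\<Sum>j\<in>J. y j powr s)"
    by (simp add: sum_distrib_left ac_simps)
  also have "B * B powr (s - 1) = B powr s"
    using \<open>0 \<le> B\<close> by (simp add: powr_mult_base)
  finally have "(\<Sum>k\<in>K. (\<Sum>j\<in>J. A k j * y j) powr s) powr (1 / s)
      \<le> (B powr s * (\<Sum>j\<in>J. y j powr s)) powr (1 / s)"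
    using assms by (intro powr_mono2) (auto intro: sum_nonneg)
  also have "\<dots> = B * (\<Sum>j\<in>J. y j powr s) powr (1 / s)"
    using assms by (simp add: powr_mult powr_powr sum_nonneg)
  finally show ?thesis .
qed

lemma lq_norm_schur_test:
  fixes A :: "'k \<Rightarrow> 'j \<Rightarrow> real" and y :: "'j \<Rightarrow> real"
  assumes fin: "finite K" "finite J" and "1 \<le> p" "0 \<le> B"
    and nonneg: "\<And>k j. k \<in> K \<Longrightarrow> j \<in> J \<Longrightarrow> 0 \<le> A k j" "\<And>j. j \<in> J \<Longrightarrow> 0 \<le> y j"
    and rows: "\<And>k. k \<in> K \<Longrightarrow> (\<Sum>j\<in>J. A k j) \<le> B"
    and cols: "\<And>j. j \<in> J \<Longrightarrow> (\<Sum>k\<in>K. A k j) \<le> B"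
  shows "lq_norm p K (\<lambda>k. \<Sum>j\<in>J. A k j * y j) \<le> B * lq_norm p J y"
proof (cases "p = \<infinity>")
  case True
  define Y where "Y = lq_norm p J y"
  have Y: "0 \<le> Y"
    unfolding Y_def using fin(2) by (rule lq_norm_nonneg)
  have "(\<Sum>j\<in>J. A k j * y j) \<le> B * Y" if "k \<in> K" for k
  proof -
    have "(\<Sum>j\<in>J. A k j * y j) \<le> (\<Sum>j\<in>J. A k j * Y)"
      unfolding Y_def using assms that by (intro sum_mono mult_left_mono member_le_lq_norm) auto
    also have "\<dots> \<le> B * Y"
      using rows[OF that] Y by (simp add: mult_right_mono flip: sum_distrib_right)
    finally show ?thesis .
  qed
  then show ?thesis
    using True fin Y \<open>0 \<le> B\<close> by (auto simp: lq_norm_def Y_def intro!: Max.boundedI)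
next
  case False
  then show ?thesis
    using root_sum_powr_schur_test[OF fin real_of_ereal_ge_one[OF assms(3) False] assms(4) nonneg rows cols]
    by (simp add: lq_norm_def)
qed

section \<open>Sums under pairwise geometric decay\<close>

lemma sum_power_dist_le:
  fixes F :: "int set" and c :: real
  assumes "finite F" "0 \<le> c" "c < 1"
  shows "(\<Sum>i\<in>F. c ^ nat \<bar>i - m\<bar>) \<le> 2 / (1 - c)"
proof -
  let ?d = "\<lambda>i. nat \<bar>i - m\<bar>"
  have fibre: "card {i\<in>F. ?d i = n} \<le> 2" for n
  proof -
    have "{i\<in>F. ?d i = n} \<subseteq> {m + int n, m - int n}"
      by auto
    then have "card {i\<in>F. ?d i = n} \<le> card {m + int n, m - int n}"
      by (intro card_mono) auto
    also have "\<dots> \<le> 2"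
      by (simp add: card_insert_if)
    finally show ?thesis .
  qed
  have "(\<Sum>i\<in>F. c ^ ?d i) = (\<Sum>n\<in>?d ` F. \<Sum>i\<in>{i\<in>F. ?d i = n}. c ^ ?d i)"
    using assms(1) by (rule sum.image_gen)
  also have "\<dots> = (\<Sum>n\<in>?d ` F. real (card {i\<in>F. ?d i = n}) * c ^ n)"
    by (intro sum.cong refl) simp
  also have "\<dots> \<le> (\<Sum>n\<in>?d ` F. 2 * c ^ n)"
    using fibre assms by (intro sum_mono mult_right_mono) auto
  also have "\<dots> \<le> (\<Sum>n. 2 * c ^ n)"
    using assms by (intro sum_le_suminf summable_mult summable_geometric) auto
  also have "\<dots> = 2 / (1 - c)"
    using assms suminf_geometric[of c] by (simp add: suminf_mult)
  finally show ?thesis .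
qed

lemma sum_le_of_pairwise_decay:
  fixes F :: "int set" and \<rho> :: "int \<Rightarrow> real"
  assumes "finite F" "\<And>i. i \<in> F \<Longrightarrow> 0 \<le> \<rho> i"
    and decay: "\<And>i i'. i \<in> F \<Longrightarrow> i' \<in> F \<Longrightarrow> \<rho> i * \<rho> i' \<le> 2 * (1/2) ^ nat \<bar>i - i'\<bar>"
  shows "(\<Sum>i\<in>F. \<rho> i) \<le> 16"
proof (cases "F = {}")
  case False
  have "Max (\<rho> ` F) \<in> \<rho> ` F"
    using assms(1) False by simp
  then obtain m where m: "m \<in> F" "\<rho> m = Max (\<rho> ` F)"
    by (metis imageE)
  have "\<rho> i \<le> 2 * (3/4) ^ nat \<bar>i - m\<bar>" if "i \<in> F" for i
  proof -
    let ?n = "nat \<bar>i - m\<bar>"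
    have "\<rho> i ^ 2 \<le> \<rho> i * \<rho> m"
      using m assms that by (simp add: power2_eq_square mult_left_mono)
    also have "\<dots> \<le> 2 * (1/2) ^ ?n"
      using decay[OF that m(1)] .
    also have "\<dots> \<le> 4 * (9/16) ^ ?n"
      using power_mono[of "1/2" "9/16::real" ?n] zero_le_power[of "9/16::real" ?n] by linarith
    also have "\<dots> = (2 * (3/4) ^ ?n) ^ 2"
      by (simp add: power_mult_distrib power2_eq_square flip: power_mult_distrib)
    finally show ?thesis
      by (rule power2_le_imp_le) simp
  qed
  then have "(\<Sum>i\<in>F. \<rho> i) \<le> (\<Sum>i\<in>F. 2 * (3/4) ^ nat \<bar>i - m\<bar>)"
    by (rule sum_mono)
  also have "\<dots> = 2 * (\<Sum>i\<in>F. (3/4) ^ nat \<bar>i - m\<bar>)"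
    by (simp add: sum_distrib_left)
  also have "\<dots> \<le> 16"
    using sum_power_dist_le[OF assms(1), of "3/4" m] by simp
  finally show ?thesis .
qed simp

lemma sum_over_overlapping_blocks_le:
  fixes M :: "int \<Rightarrow> 'a set" and f :: "'a \<Rightarrow> real"
  assumes "finite K" "finite F" "\<And>i. i \<in> F \<Longrightarrow> 0 \<le> f i"
    and overlap: "\<And>i k k'. i \<in> M k \<Longrightarrow> i \<in> M k' \<Longrightarrow> k \<le> k' + 1"
  shows "(\<Sum>k\<in>K. \<Sum>i\<in>F \<inter> M k. f i) \<le> 2 * (\<Sum>i\<in>F. f i)"
proof -
  have card_le: "card {k\<in>K. i \<in> M k} \<le> 2" for i
  proof (cases "{k\<in>K. i \<in> M k} = {}")
    case True
    then show ?thesis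
      by (simp only: card.empty)
  next
    case False
    define m where "m = Min {k\<in>K. i \<in> M k}"
    have "m \<in> {k\<in>K. i \<in> M k}"
      unfolding m_def using False assms(1) by (intro Min_in) auto
    moreover have "m \<le> k" if "k \<in> {k\<in>K. i \<in> M k}" for k
      unfolding m_def using assms(1) that by (intro Min_le) auto
    ultimately have "{k\<in>K. i \<in> M k} \<subseteq> {m, m + 1}"
      using overlap by fastforce
    then have "card {k\<in>K. i \<in> M k} \<le> card {m, m + 1}"
      by (intro card_mono) auto
    then show ?thesis
      by simp
  qed
  have "(\<Sum>k\<in>K. \<Sum>i\<in>F \<inter> M k. f i) = (\<Sum>k\<in>K. \<Sum>i\<in>{i\<in>F. i \<in> M k}. f i)"
    by (intro sum.cong) auto
  also have "\<dots> = (\<Sum>i\<in>F. real (card {k\<in>K. i \<in> M k}) * f i)"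
    using assms(1,2) by (simp add: sum.swap_restrict)
  also have "\<dots> \<le> (\<Sum>i\<in>F. 2 * f i)"
    using card_le assms(3) by (intro sum_mono mult_right_mono) auto
  finally show ?thesis
    by (simp add: sum_distrib_left)
qed

section \<open>Mixed norms l_p(l_q)\<close>

lemma inner_trunc_eq_lq_norm: "inner_trunc q M u a G k = lq_norm q (G \<inter> M k) (\<lambda>i. \<bar>a i * u i\<bar>)"
  unfolding inner_trunc_def lq_norm_def by simp

lemma mixed_trunc_eq_lq_norm: "mixed_trunc p q M u a K G = lq_norm p K (inner_trunc q M u a G)"
  unfolding mixed_trunc_def lq_norm_def by simp

lemma inner_trunc_nonneg: "finite G \<Longrightarrow> 0 \<le> inner_trunc q M u a G k"
  unfolding inner_trunc_eq_lq_norm by (rule lq_norm_nonneg) simp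

lemma mixed_trunc_nonneg: "finite K \<Longrightarrow> 0 \<le> mixed_trunc p q M u a K G"
  unfolding mixed_trunc_eq_lq_norm by (rule lq_norm_nonneg)

lemma mixed_trunc_mono:
  assumes "1 \<le> p" "1 \<le> q" "finite K" "finite G" "\<And>i. \<bar>f i\<bar> \<le> \<bar>g i\<bar>"
  shows "mixed_trunc p q M u f K G \<le> mixed_trunc p q M u g K G"
  unfolding mixed_trunc_eq_lq_norm inner_trunc_eq_lq_norm using assms
  by (intro lq_norm_mono) (auto simp: abs_mult intro!: lq_norm_nonneg mult_right_mono)

lemma mixed_trunc_add_le:
  assumes "1 \<le> p" "1 \<le> q" "finite K" "finite G"
  shows "mixed_trunc p q M u (\<lambda>i. f i + g i) K G
    \<le> 16 * (mixed_trunc p q M u f K G + mixed_trunc p q M u g K G)"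
proof -
  have inner: "inner_trunc q M u (\<lambda>i. f i + g i) G k
      \<le> 4 * (inner_trunc q M u f G k + inner_trunc q M u g G k)" for k
  proof -
    have "inner_trunc q M u (\<lambda>i. f i + g i) G k
        \<le> lq_norm q (G \<inter> M k) (\<lambda>i. \<bar>f i * u i\<bar> + \<bar>g i * u i\<bar>)"
      unfolding inner_trunc_eq_lq_norm using assms
      by (intro lq_norm_mono) (auto simp: distrib_right abs_triangle_ineq)
    also have "\<dots> \<le> 4 * (inner_trunc q M u f G k + inner_trunc q M u g G k)"
      unfolding inner_trunc_eq_lq_norm using assms by (intro lq_norm_add_le) auto
    finally show ?thesis .
  qed
  have "mixed_trunc p q M u (\<lambda>i. f i + g i) K G
      \<le> lq_norm p K (\<lambda>k. 4 * (inner_trunc q M u f G k + inner_trunc q M u g G k))"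
    unfolding mixed_trunc_eq_lq_norm using assms inner
    by (intro lq_norm_mono) (auto intro: inner_trunc_nonneg)
  also have "\<dots> = 4 * lq_norm p K (\<lambda>k. inner_trunc q M u f G k + inner_trunc q M u g G k)"
    using assms by (intro lq_norm_mult_left) (auto intro!: inner_trunc_nonneg add_nonneg_nonneg)
  also have "lq_norm p K (\<lambda>k. inner_trunc q M u f G k + inner_trunc q M u g G k)
      \<le> 4 * (mixed_trunc p q M u f K G + mixed_trunc p q M u g K G)"
    unfolding mixed_trunc_eq_lq_norm using assms by (intro lq_norm_add_le) (auto intro: inner_trunc_nonneg)
  finally show ?thesis
    by simp
qed

(* A k j' is the rho-mass of the MS-block k charged to the MT-block j', where each index i is
   charged to a block j i containing it; these are the coefficients of a Schur test. *)
lemma charged_block_sums_le: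
  fixes MS MT :: "int \<Rightarrow> int set" and \<rho> :: "int \<Rightarrow> real" and j :: "int \<Rightarrow> int"
  assumes "finite K" "finite G" "\<And>i. 0 \<le> \<rho> i"
    and overlap: "\<And>i k k'. i \<in> MS k \<Longrightarrow> i \<in> MS k' \<Longrightarrow> k \<le> k' + 1"
    and decayS: "\<And>k i i'. i \<in> MS k \<Longrightarrow> i' \<in> MS k \<Longrightarrow> \<rho> i * \<rho> i' \<le> 2 * (1/2) ^ nat \<bar>i - i'\<bar>"
    and decayT: "\<And>k i i'. i \<in> MT k \<Longrightarrow> i' \<in> MT k \<Longrightarrow> \<rho> i * \<rho> i' \<le> 2 * (1/2) ^ nat \<bar>i - i'\<bar>"
    and j: "\<And>i. i \<in> MT (j i)"
  defines "A \<equiv> \<lambda>k j'. \<Sum>i\<in>{i\<in>G \<inter> MS k. j i = j'}. \<rho> i"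
  shows "(\<Sum>j'\<in>j ` G. A k j') \<le> 32" and "(\<Sum>k\<in>K. A k j') \<le> 32"
proof -
  have "(\<Sum>j'\<in>j ` G. A k j') = (\<Sum>i\<in>G \<inter> MS k. \<rho> i)"
    unfolding A_def using assms(2) by (intro sum.group) auto
  also have "\<dots> \<le> 16"
    using assms decayS[of _ k] by (intro sum_le_of_pairwise_decay) auto
  finally show "(\<Sum>j'\<in>j ` G. A k j') \<le> 32"
    by simp
  have "(\<Sum>k\<in>K. A k j') = (\<Sum>k\<in>K. \<Sum>i\<in>{i\<in>G. j i = j'} \<inter> MS k. \<rho> i)"
    unfolding A_def by (intro sum.cong refl arg_cong[where f="sum \<rho>"]) auto
  also have "\<dots> \<le> 2 * (\<Sum>i\<in>{i\<in>G. j i = j'}. \<rho> i)"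
    using assms overlap by (intro sum_over_overlapping_blocks_le) auto
  also have "(\<Sum>i\<in>{i\<in>G. j i = j'}. \<rho> i) \<le> 16"
    using assms by (intro sum_le_of_pairwise_decay) (auto, metis decayT j)
  finally show "(\<Sum>k\<in>K. A k j') \<le> 32"
    by simp
qed

lemma mixed_trunc_transfer:
  fixes MS MT :: "int \<Rightarrow> int set" and us ut \<rho> a :: "int \<Rightarrow> real" and j :: "int \<Rightarrow> int"
  assumes "1 \<le> p" "1 \<le> q" "0 \<le> L" "finite K" "finite G" "\<And>i. 0 \<le> \<rho> i"
    and overlap: "\<And>i k k'. i \<in> MS k \<Longrightarrow> i \<in> MS k' \<Longrightarrow> k \<le> k' + 1"
    and decayS: "\<And>k i i'. i \<in> MS k \<Longrightarrow> i' \<in> MS k \<Longrightarrow> \<rho> i * \<rho> i' \<le> 2 * (1/2) ^ nat \<bar>i - i'\<bar>"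
    and decayT: "\<And>k i i'. i \<in> MT k \<Longrightarrow> i' \<in> MT k \<Longrightarrow> \<rho> i * \<rho> i' \<le> 2 * (1/2) ^ nat \<bar>i - i'\<bar>"
    and j: "\<And>i. i \<in> MT (j i)"
    and weights: "\<And>i. \<bar>a i * us i\<bar> \<le> L * \<rho> i * \<bar>a i * ut i\<bar>"
  shows "mixed_trunc p q MS us a K G \<le> 32 * L * mixed_trunc p q MT ut a (j ` G) G"
proof -
  define Y where "Y = inner_trunc q MT ut a G"
  define A where "A k j' = (\<Sum>i\<in>{i\<in>G \<inter> MS k. j i = j'}. \<rho> i)" for k j'
  have Y: "0 \<le> Y j'" for j'
    unfolding Y_def using assms(5) by (rule inner_trunc_nonneg)
  have group: "(\<Sum>j'\<in>j ` G. \<Sum>i\<in>{i\<in>G \<inter> MS k. j i = j'}. h i) = (\<Sum>i\<in>G \<inter> MS k. h i)"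
    for k and h :: "int \<Rightarrow> real"
    using assms(5) by (intro sum.group) auto
  have inner: "inner_trunc q MS us a G k \<le> L * (\<Sum>j'\<in>j ` G. A k j' * Y j')" for k
  proof -
    have "inner_trunc q MS us a G k \<le> (\<Sum>i\<in>G \<inter> MS k. \<bar>a i * us i\<bar>)"
      unfolding inner_trunc_eq_lq_norm using assms by (intro lq_norm_le_sum) auto
    also have "\<dots> \<le> (\<Sum>i\<in>G \<inter> MS k. L * (\<rho> i * Y (j i)))"
    proof (rule sum_mono)
      fix i
      assume "i \<in> G \<inter> MS k"
      then have "\<bar>a i * ut i\<bar> \<le> Y (j i)"
        unfolding Y_def inner_trunc_eq_lq_norm using assms j[of i] by (intro member_le_lq_norm) auto
      then show "\<bar>a i * us i\<bar> \<le> L * (\<rho> i * Y (j i))"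
        using weights[of i] assms by (metis mult.assoc mult_left_mono mult_nonneg_nonneg order_trans)
    qed
    also have "\<dots> = L * (\<Sum>j'\<in>j ` G. A k j' * Y j')"
      unfolding A_def group[symmetric] by (simp add: sum_distrib_left sum_distrib_right)
    finally show ?thesis .
  qed
  note sums = charged_block_sums_le[where \<rho>=\<rho> and MS=MS and MT=MT and j=j,
      OF assms(4-6) overlap decayS decayT j, folded A_def]
  have "mixed_trunc p q MS us a K G \<le> lq_norm p K (\<lambda>k. L * (\<Sum>j'\<in>j ` G. A k j' * Y j'))"
    unfolding mixed_trunc_eq_lq_norm using assms inner by (intro lq_norm_mono) (auto intro: inner_trunc_nonneg)
  also have "\<dots> = L * lq_norm p K (\<lambda>k. \<Sum>j'\<in>j ` G. A k j' * Y j')"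
    using assms Y by (intro lq_norm_mult_left) (auto simp: A_def intro!: sum_nonneg mult_nonneg_nonneg)
  also have "lq_norm p K (\<lambda>k. \<Sum>j'\<in>j ` G. A k j' * Y j') \<le> 32 * lq_norm p (j ` G) Y"
    by (rule lq_norm_schur_test[OF _ _ _ _ _ Y sums]) (use assms in \<open>auto simp: A_def intro: sum_nonneg\<close>)
  finally show ?thesis
    using assms by (simp add: mixed_trunc_eq_lq_norm Y_def mult_left_mono)
qed

lemma mixed_norm_le:
  assumes "\<And>K G. finite K \<Longrightarrow> finite G \<Longrightarrow> ennreal (mixed_trunc p q M u a K G) \<le> B"
  shows "mixed_norm p q M u a \<le> B"
  unfolding mixed_norm_def using assms by (auto intro!: SUP_least)

lemma mixed_trunc_le_mixed_norm:
  "finite K \<Longrightarrow> finite G \<Longrightarrow> ennreal (mixed_trunc p q M u a K G) \<le> mixed_norm p q M u a"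
  unfolding mixed_norm_def by (rule SUP_upper2[where i="(K, G)"]) auto

lemma mixed_norm_mono:
  assumes "1 \<le> p" "1 \<le> q" "\<And>i. \<bar>f i\<bar> \<le> \<bar>g i\<bar>"
  shows "mixed_norm p q M u f \<le> mixed_norm p q M u g"
proof (rule mixed_norm_le)
  fix K G :: "int set"
  assume "finite K" "finite G"
  then have "ennreal (mixed_trunc p q M u f K G) \<le> ennreal (mixed_trunc p q M u g K G)"
    using assms by (intro ennreal_leI mixed_trunc_mono) auto
  also have "\<dots> \<le> mixed_norm p q M u g"
    using \<open>finite K\<close> \<open>finite G\<close> by (rule mixed_trunc_le_mixed_norm)
  finally show "ennreal (mixed_trunc p q M u f K G) \<le> mixed_norm p q M u g" .
qed

lemma mixed_norm_add_le:
  assumes "1 \<le> p" "1 \<le> q"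
  shows "mixed_norm p q M u (\<lambda>i. f i + g i) \<le> 16 * (mixed_norm p q M u f + mixed_norm p q M u g)"
proof (rule mixed_norm_le)
  fix K G :: "int set"
  assume fin: "finite K" "finite G"
  then have "ennreal (mixed_trunc p q M u (\<lambda>i. f i + g i) K G)
      \<le> ennreal (16 * (mixed_trunc p q M u f K G + mixed_trunc p q M u g K G))"
    using assms by (intro ennreal_leI mixed_trunc_add_le) auto
  also have "\<dots> = 16 * (ennreal (mixed_trunc p q M u f K G) + ennreal (mixed_trunc p q M u g K G))"
    using fin by (simp add: ennreal_mult ennreal_plus mixed_trunc_nonneg)
  also have "\<dots> \<le> 16 * (mixed_norm p q M u f + mixed_norm p q M u g)"
    using fin by (intro mult_left_mono add_mono mixed_trunc_le_mixed_norm) auto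
  finally show "ennreal (mixed_trunc p q M u (\<lambda>i. f i + g i) K G)
      \<le> 16 * (mixed_norm p q M u f + mixed_norm p q M u g)" .
qed

lemma mixed_norm_transfer:
  fixes MS MT :: "int \<Rightarrow> int set" and us ut \<rho> a :: "int \<Rightarrow> real"
  assumes "1 \<le> p" "1 \<le> q" "0 \<le> L" "\<And>i. 0 \<le> \<rho> i"
    and "\<And>i k k'. i \<in> MS k \<Longrightarrow> i \<in> MS k' \<Longrightarrow> k \<le> k' + 1"
    and "\<And>k i i'. i \<in> MS k \<Longrightarrow> i' \<in> MS k \<Longrightarrow> \<rho> i * \<rho> i' \<le> 2 * (1/2) ^ nat \<bar>i - i'\<bar>"
    and "\<And>k i i'. i \<in> MT k \<Longrightarrow> i' \<in> MT k \<Longrightarrow> \<rho> i * \<rho> i' \<le> 2 * (1/2) ^ nat \<bar>i - i'\<bar>"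
    and cover: "\<And>i. \<exists>k. i \<in> MT k"
    and "\<And>i. \<bar>a i * us i\<bar> \<le> L * \<rho> i * \<bar>a i * ut i\<bar>"
  shows "mixed_norm p q MS us a \<le> ennreal (32 * L) * mixed_norm p q MT ut a"
proof (rule mixed_norm_le)
  fix K G :: "int set"
  assume fin: "finite K" "finite G"
  obtain j where j: "\<And>i. i \<in> MT (j i)"
    using cover by metis
  have "ennreal (mixed_trunc p q MS us a K G) \<le> ennreal (32 * L * mixed_trunc p q MT ut a (j ` G) G)"
    by (intro ennreal_leI mixed_trunc_transfer[where \<rho>=\<rho> and MS=MS and MT=MT and j=j])
      (use assms fin j in auto)
  also have "\<dots> = ennreal (32 * L) * ennreal (mixed_trunc p q MT ut a (j ` G) G)"
    using assms fin by (intro ennreal_mult) (auto intro: mixed_trunc_nonneg)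
  also have "\<dots> \<le> ennreal (32 * L) * mixed_norm p q MT ut a"
    using fin by (intro mult_left_mono mixed_trunc_le_mixed_norm) auto
  finally show "ennreal (mixed_trunc p q MS us a K G) \<le> ennreal (32 * L) * mixed_norm p q MT ut a" .
qed

section \<open>Discretizing sequences and quasi-concave functions\<close>

definition index_block :: "(int \<Rightarrow> real) \<Rightarrow> (int \<Rightarrow> real) \<Rightarrow> int \<Rightarrow> int set" where
  "index_block s x k = {i. s k \<le> x i \<and> x i \<le> s (k + 1)}"

lemma strongly_increasing_pos: "strongly_increasing s \<Longrightarrow> 0 < s k"
  unfolding strongly_increasing_def by auto

lemma strongly_increasing_iter:
  assumes "strongly_increasing s"
  shows "2 ^ n * s k \<le> s (k + int n)"
proof (induction n)
  case (Suc n)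
  have "2 ^ Suc n * s k \<le> 2 * s (k + int n)"
    using Suc by simp
  also have "\<dots> \<le> s (k + int n + 1)"
    using assms unfolding strongly_increasing_def by auto
  finally show ?case
    by (simp add: ac_simps)
qed simp

lemma strongly_decreasing_iter:
  assumes "strongly_decreasing s"
  shows "s (k + int n) \<le> s k / 2 ^ n"
proof (induction n)
  case (Suc n)
  have "s (k + int n + 1) \<le> s (k + int n) / 2"
    using assms unfolding strongly_decreasing_def by auto
  also have "\<dots> \<le> s k / 2 ^ Suc n"
    using Suc by simp
  finally show ?case
    by (simp add: ac_simps)
qed simp

lemma strongly_increasing_less:
  assumes "strongly_increasing s" "k < k'"
  shows "s k < s k'"
proof -
  obtain n where n: "k' = k + int (Suc n)"
    using assms(2) by (metis zless_iff_Suc_zadd)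
  have "s k < 2 ^ Suc n * s k"
    using strongly_increasing_pos[OF assms(1)] one_less_power[of "2::real" "Suc n"] by simp
  also have "\<dots> \<le> s k'"
    unfolding n by (rule strongly_increasing_iter[OF assms(1)])
  finally show ?thesis .
qed

lemma index_block_overlap:
  assumes "strongly_increasing s" "i \<in> index_block s x k" "i \<in> index_block s x k'"
  shows "k \<le> k' + 1"
proof (rule ccontr)
  assume "\<not> k \<le> k' + 1"
  then have "s (k' + 1) < s k"
    by (intro strongly_increasing_less[OF assms(1)]) simp
  then show False
    using assms(2,3) by (simp add: index_block_def)
qed

lemma index_block_cover:
  assumes "strongly_increasing s" "0 < x i"
  shows "\<exists>k. i \<in> index_block s x k"
proof -
  let ?y = "x i"
  have s0: "0 < s 0"
    using strongly_increasing_pos[OF assms(1)] .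
  obtain n :: nat where n: "s 0 / ?y < 2 ^ n"
    using real_arch_pow[of 2 "s 0 / ?y"] by auto
  have "2 ^ n * s (- int n) \<le> s 0"
    using strongly_increasing_iter[OF assms(1), of n "- int n"] by simp
  also have "s 0 < 2 ^ n * ?y"
    using n assms(2) by (simp add: field_simps)
  finally have low: "s (- int n) \<le> ?y"
    by simp
  obtain m :: nat where m: "?y / s 0 < 2 ^ m"
    using real_arch_pow[of 2 "?y / s 0"] by auto
  have high: "?y < s (int m)"
    using strongly_increasing_iter[OF assms(1), of m 0] m s0 by (simp add: field_simps)
  define S where "S = {k. - int n \<le> k \<and> s k \<le> ?y}"
  have "k \<le> int m" if "k \<in> S" for k
  proof (rule ccontr)
    assume "\<not> k \<le> int m"
    then have "s (int m) < s k"
      by (intro strongly_increasing_less[OF assms(1)]) simp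
    then show False
      using that high by (simp add: S_def)
  qed
  then have "S \<subseteq> {- int n..int m}"
    by (auto simp: S_def)
  then have "finite S"
    by (rule finite_subset) simp
  moreover have "- int n \<in> S"
    using low by (simp add: S_def)
  ultimately have "Max S \<in> S" "Max S + 1 \<notin> S"
    using Max_ge[of S "Max S + 1"] by (blast intro: Max_in, linarith)
  then show ?thesis
    by (intro exI[of _ "Max S"]) (auto simp: S_def index_block_def)
qed

lemma discretizing_seq_growth:
  assumes "discretizing_seq x \<psi>"
  shows "2 ^ n * \<psi> (x i) \<le> \<psi> (x (i + int n))"
    and "\<psi> (x (i + int n)) / x (i + int n) \<le> \<psi> (x i) / x i / 2 ^ n"
proof -
  have "strongly_increasing (\<lambda>k. \<psi> (x k))" "strongly_decreasing (\<lambda>k. \<psi> (x k) / x k)"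
    using assms unfolding discretizing_seq_def by auto
  from strongly_increasing_iter[OF this(1)] strongly_decreasing_iter[OF this(2)]
  show "2 ^ n * \<psi> (x i) \<le> \<psi> (x (i + int n))"
    and "\<psi> (x (i + int n)) / x (i + int n) \<le> \<psi> (x i) / x i / 2 ^ n"
    by auto
qed

lemma nondeg_quasi_concave_pos: "nondeg_quasi_concave \<phi> \<Longrightarrow> 0 < s \<Longrightarrow> 0 < \<phi> s"
  unfolding nondeg_quasi_concave_def by auto

lemma nondeg_quasi_concave_mono:
  "nondeg_quasi_concave \<phi> \<Longrightarrow> 0 < s \<Longrightarrow> s \<le> s' \<Longrightarrow> \<phi> s \<le> \<phi> s'"
  unfolding nondeg_quasi_concave_def by (auto intro: mono_onD)

lemma nondeg_quasi_concave_ratio_antimono: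
  assumes "nondeg_quasi_concave \<phi>" "0 < s" "s \<le> s'"
  shows "\<phi> s' / s' \<le> \<phi> s / s"
proof -
  have "antimono_on {0<..} (\<lambda>t. \<phi> t / t)"
    using assms(1) unfolding nondeg_quasi_concave_def by blast
  then have "(\<lambda>x y. y \<le> x) (\<phi> s / s) (\<phi> s' / s')"
    by (rule monotone_onD) (use assms in auto)
  then show ?thesis
    by simp
qed

lemma discretizing_seq_step_dichotomy:
  assumes "discretizing_seq s g"
  shows "g (s (k + 1)) \<le> 2 * g (s k) \<or> g (s k) / s k \<le> 2 * (g (s (k + 1)) / s (k + 1))"
proof -
  obtain Z1 Z2 where "Z1 \<union> Z2 = UNIV" "\<forall>k\<in>Z1. g (s (k + 1)) \<le> 2 * g (s k)"
    "\<forall>k\<in>Z2. g (s k) / s k \<le> 2 * (g (s (k + 1)) / s (k + 1))"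
    using assms unfolding discretizing_seq_def by blast
  then show ?thesis
    by blast
qed

lemma discretizing_block_dichotomy:
  assumes "discretizing_seq s g" "nondeg_quasi_concave g"
    and "s k \<le> y" "y \<le> s (k + 1)" "s k \<le> y'" "y' \<le> s (k + 1)"
  shows "g y' \<le> 2 * g y \<or> g y / y \<le> 2 * (g y' / y')"
  using discretizing_seq_step_dichotomy[OF assms(1), of k]
proof
  assume "g (s (k + 1)) \<le> 2 * g (s k)"
  moreover have "0 < s k"
    using assms(1) by (simp add: discretizing_seq_def strongly_increasing_pos)
  then have "g y' \<le> g (s (k + 1))" "g (s k) \<le> g y"
    using assms by (auto intro: nondeg_quasi_concave_mono)
  ultimately show ?thesis
    by auto
next
  assume "g (s k) / s k \<le> 2 * (g (s (k + 1)) / s (k + 1))"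
  moreover have "0 < s k"
    using assms(1) by (simp add: discretizing_seq_def strongly_increasing_pos)
  then have "g y / y \<le> g (s k) / s k" "g (s (k + 1)) / s (k + 1) \<le> g y' / y'"
    using assms by (auto intro: nondeg_quasi_concave_ratio_antimono)
  ultimately show ?thesis
    by auto
qed

section \<open>Decay of rho inside blocks\<close>

definition rho :: "real \<Rightarrow> real \<Rightarrow> real" where
  "rho t r = min (r / t) (t / r)"

lemma rho_nonneg: "0 < t \<Longrightarrow> 0 < r \<Longrightarrow> 0 \<le> rho t r"
  unfolding rho_def by simp

lemma rho_eq_of_le:
  assumes "0 < r" "r \<le> t"
  shows "rho t r = r / t"
proof -
  have "r / t \<le> 1" "1 \<le> t / r"
    using assms by auto
  then show ?thesis
    unfolding rho_def by simp
qed

lemma rho_eq_of_gt: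
  assumes "0 < t" "t < r"
  shows "rho t r = t / r"
proof -
  have "t / r \<le> 1" "1 \<le> r / t"
    using assms by auto
  then show ?thesis
    unfolding rho_def by (simp add: min_def)
qed

lemma rho_mult_rho_le:
  assumes "0 < t" "0 < r" "0 < r'"
  shows "rho t r * rho t r' * max (r / r') (r' / r) \<le> 1"
proof (cases "r' \<le> r")
  case True
  have "r' / r \<le> 1" "1 \<le> r / r'"
    using assms True by auto
  then have max: "max (r / r') (r' / r) = r / r'"
    by simp
  have "rho t r * rho t r' \<le> t / r * (r' / t)"
    unfolding rho_def using assms by (intro mult_mono) auto
  then have "rho t r * rho t r' * (r / r') \<le> t / r * (r' / t) * (r / r')"
    using assms by (intro mult_right_mono) auto
  then show ?thesis
    unfolding max using assms by simp
next
  case False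
  have "r / r' \<le> 1" "1 \<le> r' / r"
    using assms False by auto
  then have max: "max (r / r') (r' / r) = r' / r"
    by simp
  have "rho t r * rho t r' \<le> r / t * (t / r')"
    unfolding rho_def using assms by (intro mult_mono) auto
  then have "rho t r * rho t r' * (r' / r) \<le> r / t * (t / r') * (r' / r)"
    using assms by (intro mult_right_mono) auto
  then show ?thesis
    unfolding max using assms by simp
qed

lemma nondeg_quasi_concave_le_max_ratio:
  assumes "nondeg_quasi_concave \<phi>" "0 < r" "0 < r'"
  shows "\<phi> r' \<le> max (r / r') (r' / r) * \<phi> r"
proof (cases "r' \<le> r")
  case True
  then have "\<phi> r' \<le> 1 * \<phi> r"
    using nondeg_quasi_concave_mono[OF assms(1,3)] by simp
  also have "\<dots> \<le> r / r' * \<phi> r"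
    using True assms nondeg_quasi_concave_pos[OF assms(1,2)] by (intro mult_right_mono) auto
  finally show ?thesis
    using nondeg_quasi_concave_pos[OF assms(1,2)] by (meson max.cobounded1 mult_right_mono order_trans less_imp_le)
next
  case False
  then have "\<phi> r' / r' \<le> \<phi> r / r"
    using nondeg_quasi_concave_ratio_antimono[OF assms(1,2)] by simp
  then have "\<phi> r' \<le> r' / r * \<phi> r"
    using assms by (simp add: field_simps)
  then show ?thesis
    using nondeg_quasi_concave_pos[OF assms(1,2)] by (meson max.cobounded2 mult_right_mono order_trans less_imp_le)
qed

lemma nondeg_quasi_concave_ratio_le_max_ratio:
  assumes "nondeg_quasi_concave \<phi>" "0 < r" "0 < r'"
  shows "\<phi> r' / r' \<le> max (r / r') (r' / r) * (\<phi> r / r)"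
proof -
  have pos: "0 \<le> \<phi> r / r"
    using nondeg_quasi_concave_pos[OF assms(1,2)] assms(2) by simp
  show ?thesis
  proof (cases "r \<le> r'")
    case True
    then have "\<phi> r' / r' \<le> 1 * (\<phi> r / r)"
      using nondeg_quasi_concave_ratio_antimono[OF assms(1,2)] by simp
    also have "\<dots> \<le> r' / r * (\<phi> r / r)"
      using True assms pos by (intro mult_right_mono) auto
    finally show ?thesis
      using pos by (meson max.cobounded2 mult_right_mono order_trans)
  next
    case False
    then have "\<phi> r' \<le> \<phi> r"
      using nondeg_quasi_concave_mono[OF assms(1,3)] by simp
    then have "\<phi> r' / r' \<le> r / r' * (\<phi> r / r)"
      using assms by (simp add: field_simps)
    then show ?thesis
      using pos by (meson max.cobounded1 mult_right_mono order_trans)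
  qed
qed

lemma growth_ratio_bound:
  fixes a y y' g g' \<theta> \<theta>' D :: real
  assumes "0 < y" "0 < y'" "0 < g" "0 < g'" "0 < \<theta>" "0 < \<theta>'"
    and up: "a * (g * \<theta>) \<le> g' * \<theta>'" and down: "a * (g' * \<theta>' / y') \<le> g * \<theta> / y"
    and dichotomy: "g' \<le> 2 * g \<or> g / y \<le> 2 * (g' / y')"
    and "\<theta>' \<le> D * \<theta>" "\<theta> \<le> D * \<theta>'"
  shows "a \<le> 2 * D"
  using dichotomy
proof
  assume "g' \<le> 2 * g"
  then have "g' * \<theta>' \<le> (2 * g) * (D * \<theta>)"
    using assms by (intro mult_mono) auto
  then have "a * (g * \<theta>) \<le> (2 * D) * (g * \<theta>)"
    using up by (simp add: ac_simps)
  then show ?thesis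
    using assms by simp
next
  assume "g / y \<le> 2 * (g' / y')"
  then have "g / y * \<theta> \<le> (2 * (g' / y')) * (D * \<theta>')"
    using assms by (intro mult_mono) auto
  then have "a * (g' / y' * \<theta>') \<le> (2 * D) * (g' / y' * \<theta>')"
    using down by (simp add: ac_simps)
  then show ?thesis
    by (rule mult_right_le_imp_le) (use assms in simp)
qed

lemma block_growth_le_max_ratio:
  fixes x s :: "int \<Rightarrow> real" and \<psi> g \<theta> r :: "real \<Rightarrow> real"
  assumes disc_x: "discretizing_seq x \<psi>" and disc_s: "discretizing_seq s g"
    and g: "nondeg_quasi_concave g"
    and factor: "\<And>y. 0 < y \<Longrightarrow> \<psi> y = g y * \<theta> y"
    and \<theta>_pos: "\<And>y. 0 < y \<Longrightarrow> 0 < \<theta> y" and r_pos: "\<And>y. 0 < y \<Longrightarrow> 0 < r y"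
    and \<theta>_ratio: "\<And>y y'. 0 < y \<Longrightarrow> 0 < y' \<Longrightarrow> \<theta> y' \<le> max (r y / r y') (r y' / r y) * \<theta> y"
    and "i \<in> index_block s x k" "i + int n \<in> index_block s x k"
  shows "2 ^ n \<le> 2 * max (r (x i) / r (x (i + int n))) (r (x (i + int n)) / r (x i))"
proof -
  define i' where "i' = i + int n"
  have x_pos: "0 < x j" for j
    using disc_x strongly_increasing_pos unfolding discretizing_seq_def by blast
  show ?thesis
    unfolding i'_def[symmetric]
  proof (rule growth_ratio_bound)
    show "2 ^ n * (g (x i) * \<theta> (x i)) \<le> g (x i') * \<theta> (x i')"
      using discretizing_seq_growth(1)[OF disc_x, of n i] x_pos factor by (simp add: i'_def)
    show "2 ^ n * (g (x i') * \<theta> (x i') / x i') \<le> g (x i) * \<theta> (x i) / x i"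
      using discretizing_seq_growth(2)[OF disc_x, of i n] x_pos factor by (simp add: i'_def field_simps)
    show "g (x i') \<le> 2 * g (x i) \<or> g (x i) / x i \<le> 2 * (g (x i') / x i')"
      using assms(8,9) by (intro discretizing_block_dichotomy[OF disc_s g]) (auto simp: index_block_def i'_def)
    show "\<theta> (x i') \<le> max (r (x i) / r (x i')) (r (x i') / r (x i)) * \<theta> (x i)"
      using \<theta>_ratio x_pos by simp
    show "\<theta> (x i) \<le> max (r (x i) / r (x i')) (r (x i') / r (x i)) * \<theta> (x i')"
      using \<theta>_ratio[of "x i'" "x i"] x_pos by (simp add: max.commute)
  qed (use x_pos g \<theta>_pos nondeg_quasi_concave_pos in auto)
qed

lemma rho_decay_in_block:
  fixes x s :: "int \<Rightarrow> real" and \<psi> g \<theta> r :: "real \<Rightarrow> real"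
  assumes disc_x: "discretizing_seq x \<psi>" and disc_s: "discretizing_seq s g"
    and g: "nondeg_quasi_concave g"
    and factor: "\<And>y. 0 < y \<Longrightarrow> \<psi> y = g y * \<theta> y"
    and \<theta>_pos: "\<And>y. 0 < y \<Longrightarrow> 0 < \<theta> y" and r_pos: "\<And>y. 0 < y \<Longrightarrow> 0 < r y"
    and \<theta>_ratio: "\<And>y y'. 0 < y \<Longrightarrow> 0 < y' \<Longrightarrow> \<theta> y' \<le> max (r y / r y') (r y' / r y) * \<theta> y"
    and "0 < t" "i \<in> index_block s x k" "i' \<in> index_block s x k"
  shows "rho t (r (x i)) * rho t (r (x i')) \<le> 2 * (1/2) ^ nat \<bar>i - i'\<bar>"
proof -
  have ordered: "rho t (r (x i)) * rho t (r (x (i + int n))) \<le> 2 * (1/2) ^ n"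
    if "i \<in> index_block s x k" "i + int n \<in> index_block s x k" for i n
  proof -
    define D where "D = max (r (x i) / r (x (i + int n))) (r (x (i + int n)) / r (x i))"
    have x_pos: "0 < x j" for j
      using disc_x strongly_increasing_pos unfolding discretizing_seq_def by blast
    have "rho t (r (x i)) * rho t (r (x (i + int n))) * 2 ^ n
        \<le> rho t (r (x i)) * rho t (r (x (i + int n))) * (2 * D)"
      unfolding D_def using \<open>0 < t\<close> r_pos x_pos
      by (intro mult_left_mono mult_nonneg_nonneg rho_nonneg block_growth_le_max_ratio[OF assms(1-7) that])
        auto
    also have "\<dots> \<le> 2"
      using rho_mult_rho_le[OF \<open>0 < t\<close> r_pos r_pos, of "x i" "x (i + int n)"] x_pos
      by (simp add: D_def mult.assoc)
    finally show ?thesis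
      by (simp add: field_simps power_one_over)
  qed
  show ?thesis
  proof (cases "i \<le> i'")
    case True
    then show ?thesis
      using ordered[of i "nat (i' - i)"] assms(9,10) by simp
  next
    case False
    then show ?thesis
      using ordered[of i' "nat (i - i')"] assms(9,10) by (simp add: mult.commute)
  qed
qed

lemma interp_rho_decay:
  fixes \<phi>0 \<phi>1 \<phi> :: "real \<Rightarrow> real" and x :: "int \<Rightarrow> real"
  assumes Q0: "nondeg_quasi_concave \<phi>0" and Q1: "nondeg_quasi_concave \<phi>1"
    and Q: "nondeg_quasi_concave \<phi>"
    and disc: "discretizing_seq x (interp_fun \<phi> \<phi>0 \<phi>1)" and "0 < t"
  defines "r \<equiv> \<lambda>y. \<phi>1 y / \<phi>0 y"
  shows "\<lbrakk>discretizing_seq \<tau> \<phi>0; i \<in> index_block \<tau> x k; i' \<in> index_block \<tau> x k\<rbrakk>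
      \<Longrightarrow> rho t (r (x i)) * rho t (r (x i')) \<le> 2 * (1/2) ^ nat \<bar>i - i'\<bar>"
    and "\<lbrakk>discretizing_seq z \<phi>1; i \<in> index_block z x k; i' \<in> index_block z x k\<rbrakk>
      \<Longrightarrow> rho t (r (x i)) * rho t (r (x i')) \<le> 2 * (1/2) ^ nat \<bar>i - i'\<bar>"
proof -
  have r_pos: "0 < r y" if "0 < y" for y
    using that Q0 Q1 by (simp add: r_def nondeg_quasi_concave_pos)
  show "rho t (r (x i)) * rho t (r (x i')) \<le> 2 * (1/2) ^ nat \<bar>i - i'\<bar>"
    if "discretizing_seq \<tau> \<phi>0" "i \<in> index_block \<tau> x k" "i' \<in> index_block \<tau> x k"
  proof (rule rho_decay_in_block[OF disc that(1) Q0, where \<theta>="\<lambda>y. \<phi> (r y)"])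
    show "\<phi> (r y') \<le> max (r y / r y') (r y' / r y) * \<phi> (r y)" if "0 < y" "0 < y'" for y y'
      using that r_pos by (intro nondeg_quasi_concave_le_max_ratio[OF Q]) auto
  qed (use that \<open>0 < t\<close> r_pos Q nondeg_quasi_concave_pos in \<open>auto simp: interp_fun_def r_def\<close>)
  show "rho t (r (x i)) * rho t (r (x i')) \<le> 2 * (1/2) ^ nat \<bar>i - i'\<bar>"
    if "discretizing_seq z \<phi>1" "i \<in> index_block z x k" "i' \<in> index_block z x k"
  proof (rule rho_decay_in_block[OF disc that(1) Q1, where \<theta>="\<lambda>y. \<phi> (r y) / r y"])
    show "\<phi> (r y') / r y' \<le> max (r y / r y') (r y' / r y) * (\<phi> (r y) / r y)"
      if "0 < y" "0 < y'" for y y'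
      using that r_pos by (intro nondeg_quasi_concave_ratio_le_max_ratio[OF Q]) auto
    show "interp_fun \<phi> \<phi>0 \<phi>1 y = \<phi>1 y * (\<phi> (r y) / r y)" if "0 < y" for y
      using nondeg_quasi_concave_pos[OF Q0 that] nondeg_quasi_concave_pos[OF Q1 that]
      by (simp add: interp_fun_def r_def)
  qed (use that \<open>0 < t\<close> r_pos Q nondeg_quasi_concave_pos in auto)
qed

lemma interp_mixed_norm_transfer:
  fixes \<phi>0 \<phi>1 \<phi> :: "real \<Rightarrow> real" and x \<tau> z f :: "int \<Rightarrow> real"
  assumes "1 \<le> p" "1 \<le> q"
    and Q0: "nondeg_quasi_concave \<phi>0" and Q1: "nondeg_quasi_concave \<phi>1" and Q: "nondeg_quasi_concave \<phi>"
    and disc: "discretizing_seq x (interp_fun \<phi> \<phi>0 \<phi>1)"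
    and disc0: "discretizing_seq \<tau> \<phi>0" and disc1: "discretizing_seq z \<phi>1" and "0 < t"
  defines "N0 \<equiv> mixed_norm p q (index_block \<tau> x) (\<lambda>i. 1 / \<phi>0 (x i))"
    and "N1 \<equiv> mixed_norm p q (index_block z x) (\<lambda>i. 1 / \<phi>1 (x i))"
    and "r \<equiv> \<lambda>i. \<phi>1 (x i) / \<phi>0 (x i)"
  shows "N0 (\<lambda>i. if r i \<le> t then f i else 0) \<le> ennreal (32 * t) * N1 (\<lambda>i. if r i \<le> t then f i else 0)"
    and "N1 (\<lambda>i. if r i \<le> t then 0 else f i) \<le> ennreal (32 / t) * N0 (\<lambda>i. if r i \<le> t then 0 else f i)"
proof -
  define \<rho> where "\<rho> i = rho t (r i)" for i
  have x_pos: "0 < x i" for i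
    using disc strongly_increasing_pos unfolding discretizing_seq_def by blast
  have pos: "0 < \<phi>0 (x i)" "0 < \<phi>1 (x i)" for i
    using x_pos Q0 Q1 by (simp_all add: nondeg_quasi_concave_pos)
  have \<rho>_nonneg: "0 \<le> \<rho> i" for i
    using pos \<open>0 < t\<close> by (simp add: \<rho>_def r_def rho_nonneg)
  have si: "strongly_increasing \<tau>" "strongly_increasing z"
    using disc0 disc1 by (simp_all add: discretizing_seq_def)
  have overlap0: "\<And>i k k'. i \<in> index_block \<tau> x k \<Longrightarrow> i \<in> index_block \<tau> x k' \<Longrightarrow> k \<le> k' + 1"
    and overlap1: "\<And>i k k'. i \<in> index_block z x k \<Longrightarrow> i \<in> index_block z x k' \<Longrightarrow> k \<le> k' + 1"
    using index_block_overlap si by blast+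
  have cover0: "\<And>i. \<exists>k. i \<in> index_block \<tau> x k" and cover1: "\<And>i. \<exists>k. i \<in> index_block z x k"
    using index_block_cover si x_pos by blast+
  have decay0: "\<And>k i i'. i \<in> index_block \<tau> x k \<Longrightarrow> i' \<in> index_block \<tau> x k
      \<Longrightarrow> \<rho> i * \<rho> i' \<le> 2 * (1/2) ^ nat \<bar>i - i'\<bar>"
    unfolding \<rho>_def r_def by (rule interp_rho_decay(1)[OF Q0 Q1 Q disc \<open>0 < t\<close> disc0])
  have decay1: "\<And>k i i'. i \<in> index_block z x k \<Longrightarrow> i' \<in> index_block z x k
      \<Longrightarrow> \<rho> i * \<rho> i' \<le> 2 * (1/2) ^ nat \<bar>i - i'\<bar>"
    unfolding \<rho>_def r_def by (rule interp_rho_decay(2)[OF Q0 Q1 Q disc \<open>0 < t\<close> disc1])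
  show "N0 (\<lambda>i. if r i \<le> t then f i else 0) \<le> ennreal (32 * t) * N1 (\<lambda>i. if r i \<le> t then f i else 0)"
    unfolding N0_def N1_def
  proof (rule mixed_norm_transfer[OF assms(1,2) _ \<rho>_nonneg overlap0 decay0 decay1 cover1])
    show "\<bar>(if r i \<le> t then f i else 0) * (1 / \<phi>0 (x i))\<bar>
        \<le> t * \<rho> i * \<bar>(if r i \<le> t then f i else 0) * (1 / \<phi>1 (x i))\<bar>" for i
      using pos[of i] \<open>0 < t\<close> by (simp add: \<rho>_def r_def rho_eq_of_le abs_mult)
  qed (use \<open>0 < t\<close> in simp)
  show "N1 (\<lambda>i. if r i \<le> t then 0 else f i) \<le> ennreal (32 / t) * N0 (\<lambda>i. if r i \<le> t then 0 else f i)"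
    unfolding N0_def N1_def
  proof (rule mixed_norm_transfer[OF assms(1,2) _ \<rho>_nonneg overlap1 decay1 decay0 cover0,
        where L="1 / t", simplified])
    show "\<bar>(if r i \<le> t then 0 else f i) * (1 / \<phi>1 (x i))\<bar>
        \<le> \<rho> i * \<bar>(if r i \<le> t then 0 else f i) * (1 / \<phi>0 (x i))\<bar> / t" for i
      using pos[of i] \<open>0 < t\<close> by (simp add: \<rho>_def r_def rho_eq_of_gt abs_mult)
  qed (use \<open>0 < t\<close> in simp)
qed

section \<open>The K-functional\<close>

lemma ennreal_le_const_mult_INF:
  fixes R :: ennreal and f :: "'a \<Rightarrow> ennreal"
  assumes "0 < C" "\<And>x. x \<in> S \<Longrightarrow> R \<le> ennreal C * f x"
  shows "R \<le> ennreal C * (INF x\<in>S. f x)"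
proof -
  have inv: "ennreal (1 / C) * ennreal C = 1"
    using assms(1) by (simp flip: ennreal_mult)
  have "ennreal (1 / C) * R \<le> f x" if "x \<in> S" for x
  proof -
    have "ennreal (1 / C) * R \<le> ennreal (1 / C) * (ennreal C * f x)"
      using assms(2)[OF that] by (rule mult_left_mono) simp
    then show ?thesis
      by (simp add: inv flip: mult.assoc)
  qed
  then have "ennreal C * (ennreal (1 / C) * R) \<le> ennreal C * (INF x\<in>S. f x)"
    by (intro mult_left_mono INF_greatest) auto
  then show ?thesis
    by (simp add: inv mult.commute[of "ennreal C"] flip: mult.assoc)
qed

lemma K_functional_le_split:
  fixes N0 N1 :: "(int \<Rightarrow> real) \<Rightarrow> ennreal" and P :: "int \<Rightarrow> bool" and a :: "int \<Rightarrow> real"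
  assumes "0 < t"
  shows "K_functional N0 N1 t a
    \<le> N0 (\<lambda>i. if P i then a i else 0) + ennreal t * N1 (\<lambda>i. if P i then 0 else a i)"
    (is "_ \<le> ?R")
proof (cases "?R = \<infinity>")
  case False
  then have "in_space N0 (\<lambda>i. if P i then a i else 0)" "in_space N1 (\<lambda>i. if P i then 0 else a i)"
    using assms by (auto simp: in_space_def top_unique less_top ennreal_mult_eq_top_iff)
  moreover have "a = (\<lambda>i. (if P i then a i else 0) + (if P i then 0 else a i))"
    by auto
  ultimately show ?thesis
    unfolding K_functional_def by (intro INF_lower2) auto
next
  case True
  then show ?thesis
    by (simp only:) simp
qed

lemma split_le_decomposition:
  fixes N0 N1 :: "(int \<Rightarrow> real) \<Rightarrow> ennreal" and P :: "int \<Rightarrow> bool" and b d :: "int \<Rightarrow> real"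
  assumes "0 < c" "0 \<le> L" "0 < t"
    and add0: "\<And>f g. N0 (\<lambda>i. f i + g i) \<le> ennreal c * (N0 f + N0 g)"
    and add1: "\<And>f g. N1 (\<lambda>i. f i + g i) \<le> ennreal c * (N1 f + N1 g)"
    and mono0: "\<And>f g. (\<And>i. \<bar>f i\<bar> \<le> \<bar>g i\<bar>) \<Longrightarrow> N0 f \<le> N0 g"
    and mono1: "\<And>f g. (\<And>i. \<bar>f i\<bar> \<le> \<bar>g i\<bar>) \<Longrightarrow> N1 f \<le> N1 g"
    and transfer0: "\<And>f. N0 (\<lambda>i. if P i then f i else 0) \<le> ennreal (L * t) * N1 (\<lambda>i. if P i then f i else 0)"
    and transfer1: "\<And>f. N1 (\<lambda>i. if P i then 0 else f i) \<le> ennreal (L / t) * N0 (\<lambda>i. if P i then 0 else f i)"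
  defines "a \<equiv> \<lambda>i. b i + d i"
  shows "N0 (\<lambda>i. if P i then a i else 0) + ennreal t * N1 (\<lambda>i. if P i then 0 else a i)
    \<le> ennreal (c * (1 + L)) * (N0 b + ennreal t * N1 d)"
proof -
  let ?Om = "\<lambda>f i. if P i then f i else 0::real"
  let ?Oc = "\<lambda>f i. if P i then 0 else f i::real"
  have split: "?Om a = (\<lambda>i. ?Om b i + ?Om d i)" "?Oc a = (\<lambda>i. ?Oc b i + ?Oc d i)"
    by (auto simp: a_def)
  have "N0 (?Om a) \<le> ennreal c * (N0 (?Om b) + N0 (?Om d))"
    unfolding split(1) by (rule add0)
  also have "N0 (?Om b) \<le> N0 b"
    by (rule mono0) simp
  also have "N0 (?Om d) \<le> ennreal (L * t) * N1 (?Om d)"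
    by (rule transfer0)
  also have "\<dots> \<le> ennreal (L * t) * N1 d"
    by (intro mult_left_mono mono1) auto
  finally have part0: "N0 (?Om a) \<le> ennreal c * (N0 b + ennreal L * ennreal t * N1 d)"
    using \<open>0 \<le> L\<close> \<open>0 < t\<close> by (simp add: ennreal_mult add_mono mult_left_mono)
  have "ennreal t * N1 (?Oc b) \<le> ennreal t * (ennreal (L / t) * N0 (?Oc b))"
    using transfer1[of b] by (rule mult_left_mono) simp
  also have "\<dots> = ennreal L * N0 (?Oc b)"
    using \<open>0 < t\<close> \<open>0 \<le> L\<close> by (simp add: mult.assoc[symmetric] flip: ennreal_mult)
  also have "\<dots> \<le> ennreal L * N0 b"
    using mono0[of "?Oc b" b] by (intro mult_left_mono) auto
  finally have transfer_b: "ennreal t * N1 (?Oc b) \<le> ennreal L * N0 b" .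
  have "ennreal t * N1 (?Oc a) \<le> ennreal t * (ennreal c * (N1 (?Oc b) + N1 (?Oc d)))"
    unfolding split(2) by (intro mult_left_mono add1) simp
  also have "\<dots> = ennreal c * (ennreal t * N1 (?Oc b) + ennreal t * N1 (?Oc d))"
    by (simp add: algebra_simps)
  also note transfer_b
  also have "ennreal t * N1 (?Oc d) \<le> ennreal t * N1 d"
    using mono1[of "?Oc d" d] by (intro mult_left_mono) auto
  finally have part1: "ennreal t * N1 (?Oc a) \<le> ennreal c * (ennreal L * N0 b + ennreal t * N1 d)"
    by (simp add: add_mono mult_left_mono)
  have "N0 (?Om a) + ennreal t * N1 (?Oc a)
      \<le> ennreal c * (N0 b + ennreal L * ennreal t * N1 d) + ennreal c * (ennreal L * N0 b + ennreal t * N1 d)"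
    using part0 part1 by (rule add_mono)
  also have "\<dots> = ennreal c * (1 + ennreal L) * (N0 b + ennreal t * N1 d)"
    by (simp add: algebra_simps)
  also have "ennreal c * (1 + ennreal L) = ennreal (c * (1 + L))"
    using \<open>0 < c\<close> \<open>0 \<le> L\<close> by (simp add: ennreal_mult ennreal_plus)
  finally show ?thesis .
qed

lemma split_le_K_functional:
  fixes N0 N1 :: "(int \<Rightarrow> real) \<Rightarrow> ennreal" and P :: "int \<Rightarrow> bool" and a :: "int \<Rightarrow> real"
  assumes "0 < c" "0 \<le> L" "0 < t"
    and add0: "\<And>f g. N0 (\<lambda>i. f i + g i) \<le> ennreal c * (N0 f + N0 g)"
    and add1: "\<And>f g. N1 (\<lambda>i. f i + g i) \<le> ennreal c * (N1 f + N1 g)"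
    and mono0: "\<And>f g. (\<And>i. \<bar>f i\<bar> \<le> \<bar>g i\<bar>) \<Longrightarrow> N0 f \<le> N0 g"
    and mono1: "\<And>f g. (\<And>i. \<bar>f i\<bar> \<le> \<bar>g i\<bar>) \<Longrightarrow> N1 f \<le> N1 g"
    and transfer0: "\<And>f. N0 (\<lambda>i. if P i then f i else 0) \<le> ennreal (L * t) * N1 (\<lambda>i. if P i then f i else 0)"
    and transfer1: "\<And>f. N1 (\<lambda>i. if P i then 0 else f i) \<le> ennreal (L / t) * N0 (\<lambda>i. if P i then 0 else f i)"
  shows "N0 (\<lambda>i. if P i then a i else 0) + ennreal t * N1 (\<lambda>i. if P i then 0 else a i)
    \<le> ennreal (c * (1 + L)) * K_functional N0 N1 t a"
  unfolding K_functional_def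
proof (rule ennreal_le_const_mult_INF)
  fix bd
  assume "bd \<in> {(b, d). a = (\<lambda>i. b i + d i) \<and> in_space N0 b \<and> in_space N1 d}"
  then have "a = (\<lambda>i. fst bd i + snd bd i)"
    by auto
  then show "N0 (\<lambda>i. if P i then a i else 0) + ennreal t * N1 (\<lambda>i. if P i then 0 else a i)
      \<le> ennreal (c * (1 + L)) * (N0 (fst bd) + ennreal t * N1 (snd bd))"
    using split_le_decomposition[OF assms, where b="fst bd" and d="snd bd"] by (simp only:)
qed (use \<open>0 < c\<close> \<open>0 \<le> L\<close> in \<open>simp add: add_pos_nonneg\<close>)

lemma interp_K_functional_equiv:
  fixes \<phi>0 \<phi>1 \<phi> :: "real \<Rightarrow> real" and x \<tau> z a :: "int \<Rightarrow> real"
  assumes "1 \<le> p" "1 \<le> q"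
    and "nondeg_quasi_concave \<phi>0" "nondeg_quasi_concave \<phi>1" "nondeg_quasi_concave \<phi>"
    and "discretizing_seq x (interp_fun \<phi> \<phi>0 \<phi>1)" "discretizing_seq \<tau> \<phi>0" "discretizing_seq z \<phi>1"
    and "0 < t"
  defines "N0 \<equiv> mixed_norm p q (index_block \<tau> x) (\<lambda>i. 1 / \<phi>0 (x i))"
    and "N1 \<equiv> mixed_norm p q (index_block z x) (\<lambda>i. 1 / \<phi>1 (x i))"
  shows "K_functional N0 N1 t a \<le> N0 (\<lambda>i. if \<phi>1 (x i) / \<phi>0 (x i) \<le> t then a i else 0)
      + ennreal t * N1 (\<lambda>i. if \<phi>1 (x i) / \<phi>0 (x i) \<le> t then 0 else a i)"
    and "N0 (\<lambda>i. if \<phi>1 (x i) / \<phi>0 (x i) \<le> t then a i else 0)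
      + ennreal t * N1 (\<lambda>i. if \<phi>1 (x i) / \<phi>0 (x i) \<le> t then 0 else a i)
      \<le> ennreal 528 * K_functional N0 N1 t a"
proof -
  have add: "N0 (\<lambda>i. f i + g i) \<le> ennreal 16 * (N0 f + N0 g)"
    "N1 (\<lambda>i. f i + g i) \<le> ennreal 16 * (N1 f + N1 g)" for f g
    unfolding N0_def N1_def using mixed_norm_add_le[OF assms(1,2)] by simp_all
  have mono: "N0 f \<le> N0 g" "N1 f \<le> N1 g" if "\<And>i. \<bar>f i\<bar> \<le> \<bar>g i\<bar>" for f g
    unfolding N0_def N1_def using mixed_norm_mono[OF assms(1,2) that] by simp_all
  show "K_functional N0 N1 t a \<le> N0 (\<lambda>i. if \<phi>1 (x i) / \<phi>0 (x i) \<le> t then a i else 0)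
      + ennreal t * N1 (\<lambda>i. if \<phi>1 (x i) / \<phi>0 (x i) \<le> t then 0 else a i)"
    and "N0 (\<lambda>i. if \<phi>1 (x i) / \<phi>0 (x i) \<le> t then a i else 0)
      + ennreal t * N1 (\<lambda>i. if \<phi>1 (x i) / \<phi>0 (x i) \<le> t then 0 else a i)
      \<le> ennreal 528 * K_functional N0 N1 t a"
    using K_functional_le_split[OF \<open>0 < t\<close>]
      split_le_K_functional[where c=16 and L=32 and P="\<lambda>i. \<phi>1 (x i) / \<phi>0 (x i) \<le> t",
        OF _ _ \<open>0 < t\<close> add mono interp_mixed_norm_transfer[OF assms(1-9), folded N0_def N1_def]]
    by (simp_all del: ennreal_numeral)
qed

theorem lemma3p9:
  fixes p q :: ereal
    and \<phi>0 \<phi>1 \<phi> :: "real \<Rightarrow> real"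
    and tt \<tau> z :: "int \<Rightarrow> real"
  assumes "1 \<le> p" and "1 \<le> q"
    and "nondeg_quasi_concave \<phi>0" and "nondeg_quasi_concave \<phi>1" and "nondeg_quasi_concave \<phi>"
    and "discretizing_seq tt (interp_fun \<phi> \<phi>0 \<phi>1)"
    and "discretizing_seq \<tau> \<phi>0"
    and "discretizing_seq z \<phi>1"
  defines "N0 \<equiv> mixed_norm p q (\<lambda>k. {i. \<tau> k \<le> tt i \<and> tt i \<le> \<tau> (k+1)}) (\<lambda>i. 1 / \<phi>0 (tt i))"
    and "N1 \<equiv> mixed_norm p q (\<lambda>k. {i. z k \<le> tt i \<and> tt i \<le> z (k+1)}) (\<lambda>i. 1 / \<phi>1 (tt i))"
  shows "\<exists>C>0. \<forall>a t. in_sum_space N0 N1 a \<and> t > 0 \<longrightarrow>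
           (let R = N0 (\<lambda>i. if \<phi>1 (tt i) / \<phi>0 (tt i) \<le> t then a i else 0)
                    + ennreal t * N1 (\<lambda>i. if \<phi>1 (tt i) / \<phi>0 (tt i) > t then a i else 0)
            in K_functional N0 N1 t a \<le> ennreal C * R \<and> R \<le> ennreal C * K_functional N0 N1 t a)"
proof -
  have N: "N0 = mixed_norm p q (index_block \<tau> tt) (\<lambda>i. 1 / \<phi>0 (tt i))"
    "N1 = mixed_norm p q (index_block z tt) (\<lambda>i. 1 / \<phi>1 (tt i))"
    by (simp_all add: N0_def N1_def index_block_def[abs_def])
  define R where "R a t = N0 (\<lambda>i. if \<phi>1 (tt i) / \<phi>0 (tt i) \<le> t then a i else 0)
    + ennreal t * N1 (\<lambda>i. if \<phi>1 (tt i) / \<phi>0 (tt i) \<le> t then 0 else a i)" for a t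
  note equiv = interp_K_functional_equiv[OF assms(1-8), folded N, folded R_def]
  have high: "(\<lambda>i. if t < \<phi>1 (tt i) / \<phi>0 (tt i) then a i else 0)
      = (\<lambda>i. if \<phi>1 (tt i) / \<phi>0 (tt i) \<le> t then 0 else a i)" for a t
    by (auto simp: fun_eq_iff)
  have le: "x \<le> ennreal 528 * x" for x :: ennreal
    using mult_right_mono[of 1 "ennreal 528" x] by simp
  show ?thesis
    unfolding Let_def high R_def[symmetric]
  proof (intro exI[of _ 528] conjI allI impI)
    fix a and t :: real
    assume "in_sum_space N0 N1 a \<and> 0 < t"
    then have "0 < t"
      by simp
    show "K_functional N0 N1 t a \<le> ennreal 528 * R a t"
      using \<open>0 < t\<close> by (rule order_trans[OF equiv(1) le])
    show "R a t \<le> ennreal 528 * K_functional N0 N1 t a"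
      using \<open>0 < t\<close> by (rule equiv(2))
  qed simp
qed

end
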